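(* Let $s\ge 1$ be a fixed integer. Consider a sequence of $(s+1)$-tuples of integers $2\le n_0\le n_1\le\dots\le n_s$ (indexed so that $n_s\to\infty$) such that $n_0=(\log n_s)^{\alpha}$ with $\alpha\ge 2\sqrt{\frac{\log n_s}{\log\log n_s}}$. For every $0\le i\le s-1$ let $k_i=\frac{\log n_s}{\log n_i}$, and let $x_0$ be the unique root of the equation $sx-1-\sum_{j=0}^{s-1}x^{\frac{k_j-1}{k_j}}=0$ in the interval $[1,\infty)$. Then $$ch(K_{n_0,\dots,n_s})=(1+o(1))\frac{\log n_s}{\log x_0}$$ as $n_s\to\infty$.
   Context: All logarithms are to base 2. For a graph $G=(V,E)$, the choice number $ch(G)$ is the minimum integer $k$ such that for every assignment of a list $S(v)$ of at least $k$ colors to each vertex $v\in V$, there is a proper vertex coloring of $G$ assigning to each vertex $v$ a color from $S(v)$. $K_{n_0,\dots,n_s}$ denotes the complete $(s+1)$-partite graph with parts of sizes $n_0,\dots,n_s$. *)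

theory Defs
  imports "HOL-Analysis.Analysis" "HOL-Library.Landau_Symbols"
begin

definition choosable :: "'a set \<Rightarrow> ('a \<Rightarrow> 'a \<Rightarrow> bool) \<Rightarrow> nat \<Rightarrow> bool" where
  "choosable V E k \<longleftrightarrow>
     (\<forall>S :: 'a \<Rightarrow> nat set. (\<forall>v\<in>V. finite (S v) \<and> k \<le> card (S v)) \<longrightarrow>
        (\<exists>c. (\<forall>v\<in>V. c v \<in> S v) \<and> (\<forall>u\<in>V. \<forall>v\<in>V. E u v \<longrightarrow> c u \<noteq> c v)))"

definition choice_number :: "'a set \<Rightarrow> ('a \<Rightarrow> 'a \<Rightarrow> bool) \<Rightarrow> nat" where
  "choice_number V E = (LEAST k. choosable V E k)"

text \<open>The complete (s+1)-partite graph K_{n_0,...,n_s}: vertex (i,j) is the j-th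
  vertex of part i (i \<le> s, j < n i); two vertices are adjacent iff they lie in
  different parts.\<close>

definition cmp_vertices :: "nat \<Rightarrow> (nat \<Rightarrow> nat) \<Rightarrow> (nat \<times> nat) set" where
  "cmp_vertices s n = {(i, j). i \<le> s \<and> j < n i}"

definition cmp_adj :: "nat \<times> nat \<Rightarrow> nat \<times> nat \<Rightarrow> bool" where
  "cmp_adj u v \<longleftrightarrow> fst u \<noteq> fst v"

definition ch_complete_multipartite :: "nat \<Rightarrow> (nat \<Rightarrow> nat) \<Rightarrow> nat" where
  "ch_complete_multipartite s n = choice_number (cmp_vertices s n) cmp_adj"

end

theory Submission
  imports Defs "HOL-Real_Asymp.Real_Asymp"
begin

text \<open>
  Let \<open>t > 0\<close> be the exponent with \<open>\<Sum>i\<le>s. n\<^sub>i powr -t = s\<close>; the equation defining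
  \<open>x\<^sub>0\<close> says exactly that \<open>t = log x\<^sub>0 / log n\<^sub>s\<close>, so the claim is \<open>ch \<cdot> t \<longrightarrow> 1\<close>.

  Upper bound: send every colour independently to part \<open>i\<close> with probability
  \<open>p\<^sub>i = 1 - n\<^sub>i powr -t\<close> (these sum to 1) and give each vertex a colour of its list that
  was sent to its own part; this is a proper colouring. A vertex of part \<open>i\<close> gets no
  colour with probability at most \<open>n\<^sub>i powr (-t k)\<close>, so for \<open>k \<ge> (1 + \<epsilon>) / t\<close> the expected
  number of such vertices is at most \<open>(s + 1) n\<^sub>0 powr -\<epsilon> < 1\<close>.

  Lower bound: take as lists \<open>k\<close>-subsets of a palette of \<open>M = 4 k\<^sup>2\<close> colours. A proper
  colouring from the lists yields a map \<open>g\<close> from the palette to the parts such that every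
  list in part \<open>i\<close> meets \<open>g\<^sup>-\<^sup>1(i)\<close>. For fixed \<open>g\<close> the proportion of such list assignments
  is at most \<open>exp (- n\<^sub>i r\<^sub>i)\<close> for every \<open>i\<close>, where \<open>r\<^sub>i \<ge> (1 - |g\<^sup>-\<^sup>1(i)|/M - k/M)\<^sup>k\<close> is the
  probability that a random list misses \<open>g\<^sup>-\<^sup>1(i)\<close>. As the fibres of \<open>g\<close> partition the
  palette, for \<open>k \<le> (1 - \<epsilon>) / t\<close> some \<open>n\<^sub>i r\<^sub>i\<close> exceeds \<open>M ln (s + 1)\<close>, and the union bound
  over the \<open>(s + 1)\<^sup>M\<close> maps \<open>g\<close> leaves a list assignment without proper colouring.

  The hypothesis on \<open>n\<^sub>0\<close> makes both error terms vanish: it gives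
  \<open>t \<le> 1 / log n\<^sub>0 \<le> 1 / (2 sqrt (log n\<^sub>s))\<close>, and \<open>n\<^sub>0 powr \<epsilon>\<close> dominates \<open>(log n\<^sub>s)\<^sup>2\<close>.
\<close>

section \<open>Choice numbers and complete multipartite graphs\<close>

lemma choosable_mono:
  assumes "choosable V E k" "k \<le> l"
  shows "choosable V E l"
  using assms unfolding choosable_def by (blast intro: le_trans)

lemma choice_number_le: "choosable V E k \<Longrightarrow> choice_number V E \<le> k"
  unfolding choice_number_def by (rule Least_le)

lemma less_choice_number:
  assumes "choosable V E l" "\<not> choosable V E k"
  shows "k < choice_number V E"
proof -
  have "choosable V E (choice_number V E)"
    unfolding choice_number_def using assms(1) by (rule LeastI)
  then show ?thesis
    using assms(2) choosable_mono by (meson not_less)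
qed

lemma cmp_vertices_Sigma: "cmp_vertices s n = Sigma {..s} (\<lambda>i. {..<n i})"
  unfolding cmp_vertices_def by auto

lemma finite_cmp_vertices: "finite (cmp_vertices s n)"
  unfolding cmp_vertices_Sigma by auto

lemma fst_cmp_vertices: "v \<in> cmp_vertices s n \<Longrightarrow> fst v \<le> s"
  unfolding cmp_vertices_def by auto

lemma sum_cmp_vertices:
  "(\<Sum>v\<in>cmp_vertices s n. f (fst v)) = (\<Sum>i\<le>s. of_nat (n i) * f i)"
  unfolding cmp_vertices_Sigma
  using sum.Sigma[of "{..s}" "\<lambda>i. {..<n i}" "\<lambda>i j. f i"] by (simp add: split_def)

lemma prod_cmp_vertices:
  "(\<Prod>v\<in>cmp_vertices s n. f (fst v)) = (\<Prod>i\<le>s. f i ^ n i)"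
  unfolding cmp_vertices_Sigma
  using prod.Sigma[of "{..s}" "\<lambda>i. {..<n i}" "\<lambda>i j. f i"] by (simp add: split_def)

section \<open>Colouring through a random map from colours to parts\<close>

lemma sum_PiE_prod_avoiding:
  fixes p :: "'b \<Rightarrow> 'c::comm_ring_1"
  assumes "finite C" "finite I" "T \<subseteq> C" "i \<in> I" "(\<Sum>j\<in>I. p j) = 1"
  shows "(\<Sum>f\<in>PiE C (\<lambda>_. I). if \<forall>c\<in>T. f c \<noteq> i then \<Prod>c\<in>C. p (f c) else 0)
           = (1 - p i) ^ card T"
proof -
  define h where "h c j = (if c \<in> T \<and> j = i then 0 else p j)" for c j
  have "(\<Sum>f\<in>PiE C (\<lambda>_. I). if \<forall>c\<in>T. f c \<noteq> i then \<Prod>c\<in>C. p (f c) else 0)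
      = (\<Sum>f\<in>PiE C (\<lambda>_. I). \<Prod>c\<in>C. h c (f c))"
  proof (rule sum.cong[OF refl])
    fix f
    show "(if \<forall>c\<in>T. f c \<noteq> i then \<Prod>c\<in>C. p (f c) else 0) = (\<Prod>c\<in>C. h c (f c))"
    proof (cases "\<forall>c\<in>T. f c \<noteq> i")
      case False
      then obtain c where "c \<in> C" "h c (f c) = 0"
        using assms(3) unfolding h_def by auto
      then have "(\<Prod>c\<in>C. h c (f c)) = 0"
        using assms(1) by (meson prod_zero)
      then show ?thesis
        using False by auto
    qed (auto simp: h_def intro!: prod.cong)
  qed
  also have "\<dots> = (\<Prod>c\<in>C. \<Sum>j\<in>I. h c j)"
    using assms(1,2) by (rule prod_sum_PiE[symmetric])
  also have "\<dots> = (\<Prod>c\<in>C. if c \<in> T then 1 - p i else 1)"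
  proof (rule prod.cong[OF refl])
    fix c
    have "(\<Sum>j\<in>I. h c j) = (\<Sum>j\<in>I. p j - (if j = i then (if c \<in> T then p i else 0) else 0))"
      by (rule sum.cong) (auto simp: h_def)
    also have "\<dots> = (\<Sum>j\<in>I. p j) - (if c \<in> T then p i else 0)"
      using assms(2,4) by (simp add: sum_subtractf)
    also have "\<dots> = (if c \<in> T then 1 - p i else 1)"
      using assms(5) by simp
    finally show "(\<Sum>j\<in>I. h c j) = (if c \<in> T then 1 - p i else 1)" .
  qed
  also have "\<dots> = (1 - p i) ^ card T"
    using assms(1,3) by (simp add: prod.If_cases Int_absorb1 Int_commute)
  finally show ?thesis .
qed

lemma first_moment_method:
  fixes w :: "'f \<Rightarrow> real"
  assumes "finite F" "finite V" "\<And>f. f \<in> F \<Longrightarrow> 0 \<le> w f" "(\<Sum>f\<in>F. w f) = 1"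
    and "(\<Sum>v\<in>V. \<Sum>f\<in>F. if B f v then w f else 0) < 1"
  shows "\<exists>f\<in>F. \<forall>v\<in>V. \<not> B f v"
proof (rule ccontr)
  assume no_good: "\<not> ?thesis"
  have "w f \<le> (\<Sum>v\<in>V. if B f v then w f else 0)" if f: "f \<in> F" for f
  proof -
    obtain v where "v \<in> V" "B f v"
      using no_good f by auto
    then have "(if B f v then w f else 0) \<le> (\<Sum>v\<in>V. if B f v then w f else 0)"
      using assms(2,3) f by (intro member_le_sum) auto
    then show ?thesis
      using \<open>B f v\<close> by simp
  qed
  then have "(\<Sum>f\<in>F. w f) \<le> (\<Sum>f\<in>F. \<Sum>v\<in>V. if B f v then w f else 0)"
    by (rule sum_mono)
  also have "\<dots> = (\<Sum>v\<in>V. \<Sum>f\<in>F. if B f v then w f else 0)"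
    by (rule sum.swap)
  finally have "1 \<le> (\<Sum>v\<in>V. \<Sum>f\<in>F. if B f v then w f else 0)"
    unfolding assms(4) .
  then show False
    using assms(5) by (meson leD)
qed

lemma cmp_colourable_if_part_map:
  assumes "\<forall>v\<in>cmp_vertices s n. S v \<inter> f -` {fst v} \<noteq> {}"
  shows "\<exists>col. (\<forall>v\<in>cmp_vertices s n. col v \<in> S v) \<and>
    (\<forall>u\<in>cmp_vertices s n. \<forall>v\<in>cmp_vertices s n. cmp_adj u v \<longrightarrow> col u \<noteq> col v)"
proof -
  have "\<exists>c. c \<in> S v \<and> f c = fst v" if "v \<in> cmp_vertices s n" for v
    using assms that by blast
  then obtain col where col: "\<And>v. v \<in> cmp_vertices s n \<Longrightarrow> col v \<in> S v \<and> f (col v) = fst v"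
    by metis
  then show ?thesis
    unfolding cmp_adj_def by metis
qed

lemma exists_part_map_meeting_lists:
  fixes p :: "nat \<Rightarrow> real" and S :: "'v \<Rightarrow> nat set" and part :: "'v \<Rightarrow> nat"
  assumes "finite V" and S: "\<And>v. v \<in> V \<Longrightarrow> finite (S v) \<and> k \<le> card (S v) \<and> part v \<le> s"
    and p_nonneg: "\<And>i. i \<le> s \<Longrightarrow> 0 \<le> p i" and p_sum: "(\<Sum>i\<le>s. p i) = 1"
    and expected: "(\<Sum>v\<in>V. (1 - p (part v)) ^ k) < 1"
  shows "\<exists>f. \<forall>v\<in>V. S v \<inter> f -` {part v} \<noteq> {}"
proof -
  define C where "C = \<Union> (S ` V)"
  define F where "F = PiE C (\<lambda>_. {..s})"
  \<comment> \<open>\<open>w f\<close> is the probability of \<open>f\<close> when the colours in \<open>C\<close> are sent to parts independently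
    according to \<open>p\<close>.\<close>
  define w where "w f = (\<Prod>c\<in>C. p (f c))" for f :: "nat \<Rightarrow> nat"
  have "finite C"
    unfolding C_def using assms(1) S by auto
  have p_le_1: "p i \<le> 1" if "i \<le> s" for i
    using p_nonneg p_sum that by (intro sum_nonneg_leq_bound[of "{..s}" p]) auto
  have misses: "(\<Sum>f\<in>F. if \<forall>c\<in>S v. f c \<noteq> part v then w f else 0) \<le> (1 - p (part v)) ^ k"
    if "v \<in> V" for v
  proof -
    have "S v \<subseteq> C"
      using that unfolding C_def by auto
    then have "(\<Sum>f\<in>F. if \<forall>c\<in>S v. f c \<noteq> part v then w f else 0) = (1 - p (part v)) ^ card (S v)"
      unfolding F_def w_def using \<open>finite C\<close> p_sum S[OF that] by (intro sum_PiE_prod_avoiding) auto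
    also have "\<dots> \<le> (1 - p (part v)) ^ k"
      using p_nonneg p_le_1 S[OF that] by (intro power_decreasing) auto
    finally show ?thesis .
  qed
  have "\<exists>f\<in>F. \<forall>v\<in>V. \<not> (\<forall>c\<in>S v. f c \<noteq> part v)"
  proof (rule first_moment_method)
    show "finite F"
      unfolding F_def using \<open>finite C\<close> by (simp add: finite_PiE)
    show "0 \<le> w f" if "f \<in> F" for f
      using that p_nonneg unfolding w_def F_def by (auto intro!: prod_nonneg)
    show "(\<Sum>f\<in>F. w f) = 1"
      using sum_PiE_prod_avoiding[of C "{..s}" "{}" 0 p] \<open>finite C\<close> p_sum
      by (simp add: F_def w_def)
    have "(\<Sum>v\<in>V. \<Sum>f\<in>F. if \<forall>c\<in>S v. f c \<noteq> part v then w f else 0)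
        \<le> (\<Sum>v\<in>V. (1 - p (part v)) ^ k)"
      using misses by (rule sum_mono)
    then show "(\<Sum>v\<in>V. \<Sum>f\<in>F. if \<forall>c\<in>S v. f c \<noteq> part v then w f else 0) < 1"
      using expected by (rule order.strict_trans1)
  qed fact
  then show ?thesis
    by blast
qed

lemma cmp_choosable_if_expected_misses_lt_1:
  fixes p :: "nat \<Rightarrow> real"
  assumes "\<And>i. i \<le> s \<Longrightarrow> 0 \<le> p i" "(\<Sum>i\<le>s. p i) = 1"
    and expected: "(\<Sum>i\<le>s. real (n i) * (1 - p i) ^ k) < 1"
  shows "choosable (cmp_vertices s n) cmp_adj k"
  unfolding choosable_def
proof (intro allI impI)
  fix S :: "nat \<times> nat \<Rightarrow> nat set"
  assume "\<forall>v\<in>cmp_vertices s n. finite (S v) \<and> k \<le> card (S v)"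
  moreover have "(\<Sum>v\<in>cmp_vertices s n. (1 - p (fst v)) ^ k) < 1"
    using expected sum_cmp_vertices[of "\<lambda>i. (1 - p i) ^ k" s n] by simp
  ultimately obtain f where "\<forall>v\<in>cmp_vertices s n. S v \<inter> f -` {fst v} \<noteq> {}"
    using exists_part_map_meeting_lists[of "cmp_vertices s n" S k fst s p] assms(1,2)
      finite_cmp_vertices fst_cmp_vertices by blast
  then show "\<exists>col. (\<forall>v\<in>cmp_vertices s n. col v \<in> S v) \<and>
      (\<forall>u\<in>cmp_vertices s n. \<forall>v\<in>cmp_vertices s n. cmp_adj u v \<longrightarrow> col u \<noteq> col v)"
    by (rule cmp_colourable_if_part_map)
qed

text \<open>Needed because \<^const>\<open>choice_number\<close> is a \<open>LEAST\<close>, about which nothing is known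
  unless some \<open>k\<close> is choosable.\<close>

lemma ex_cmp_choosable: "\<exists>k. choosable (cmp_vertices s n) cmp_adj k"
proof -
  define N where "N = (\<Sum>i\<le>s. real (n i))"
  define q where "q = 1 - 1 / (real s + 1)"
  have "0 \<le> N" "0 \<le> q"
    unfolding N_def q_def by (auto intro: sum_nonneg simp: field_simps)
  obtain k where k: "q ^ k < 1 / (N + 1)"
    using real_arch_pow_inv[of "1 / (N + 1)" q] \<open>0 \<le> N\<close> unfolding q_def by auto
  have "(\<Sum>i\<le>s. real (n i) * (1 - 1 / (real s + 1)) ^ k) = N * q ^ k"
    unfolding N_def q_def by (simp add: sum_distrib_right)
  also have "\<dots> \<le> N * (1 / (N + 1))"
    using k \<open>0 \<le> N\<close> by (intro mult_left_mono) auto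
  also have "\<dots> < 1"
    using \<open>0 \<le> N\<close> by (simp add: field_simps)
  finally show ?thesis
    using cmp_choosable_if_expected_misses_lt_1[of s "\<lambda>_. 1 / (real s + 1)" n k] by auto
qed

section \<open>Counting list assignments from a small palette\<close>

definition avoid_prob :: "nat \<Rightarrow> nat \<Rightarrow> nat \<Rightarrow> real" where
  "avoid_prob M k m = real ((M - m) choose k) / real (M choose k)"

lemma binomial_mult_power_le:
  assumes "k \<le> a" "a \<le> M" "0 < M"
  shows "real (M choose k) * ((real a - real k) / real M) ^ k \<le> real (a choose k)"
proof -
  have falling: "real (N choose k) * fact k = (\<Prod>i<k. real N - real i)" for N
    using gbinomial_mult_fact'[of "real N" k] by (simp add: binomial_gbinomial atLeast0LessThan)
  have "(\<Prod>i<k. real M - real i) * ((real a - real k) / real M) ^ k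
      = (\<Prod>i<k. (real M - real i) * ((real a - real k) / real M))"
    by (simp only: prod.distrib prod_constant card_lessThan)
  also have "\<dots> \<le> (\<Prod>i<k. real a - real i)"
  proof (rule prod_mono)
    fix i assume "i \<in> {..<k}"
    then have nonneg: "0 \<le> real M - real i" "0 \<le> real a - real k"
      using assms by auto
    have "0 \<le> real M * (real k - real i) + real i * (real a - real k)"
      using \<open>i \<in> {..<k}\<close> nonneg by simp
    then have "(real M - real i) * (real a - real k) \<le> real M * (real a - real i)"
      by (simp add: algebra_simps)
    then have "(real M - real i) * ((real a - real k) / real M) \<le> real a - real i"
      using assms(3) by (simp add: field_simps)
    moreover have "0 \<le> (real M - real i) * ((real a - real k) / real M)"
      using nonneg by simp
    ultimately show "0 \<le> (real M - real i) * ((real a - real k) / real M) \<and>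
        (real M - real i) * ((real a - real k) / real M) \<le> real a - real i"
      by simp
  qed
  finally have "real (M choose k) * ((real a - real k) / real M) ^ k * fact k \<le> real (a choose k) * fact k"
    by (simp add: falling[symmetric] mult_ac)
  then show ?thesis
    by simp
qed

lemma card_subsets_meeting:
  assumes "finite X"
  shows "card {A. A \<subseteq> X \<and> card A = k \<and> A \<inter> P \<noteq> {}} = (card X choose k) - (card (X - P) choose k)"
proof -
  have "{A. A \<subseteq> X \<and> card A = k \<and> A \<inter> P \<noteq> {}}
      = {A. A \<subseteq> X \<and> card A = k} - {A. A \<subseteq> X - P \<and> card A = k}"
    by auto
  moreover have "{A. A \<subseteq> X - P \<and> card A = k} \<subseteq> {A. A \<subseteq> X \<and> card A = k}"
    by auto
  moreover have "finite {A. A \<subseteq> X - P \<and> card A = k}"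
    by (rule finite_subset[of _ "Pow X"]) (use assms in auto)
  ultimately show ?thesis
    using assms by (simp add: card_Diff_subset n_subsets)
qed

lemma le_powr_inverse_if_power_le:
  fixes x y :: real
  assumes "1 \<le> k" "0 \<le> y" "x ^ k \<le> y"
  shows "x \<le> y powr (1 / real k)"
proof (cases "x \<le> 0")
  case False
  then have "x = (x ^ k) powr (1 / real k)"
    using assms(1) by (simp add: powr_realpow[symmetric] powr_powr)
  also have "\<dots> \<le> y powr (1 / real k)"
    using False assms by (intro powr_mono2) auto
  finally show ?thesis .
qed (use order.trans powr_ge_zero in blast)

lemma cmp_part_map_if_choosable:
  fixes S :: "nat \<times> nat \<Rightarrow> nat set"
  assumes "choosable (cmp_vertices s n) cmp_adj k"
    and "\<And>v. v \<in> cmp_vertices s n \<Longrightarrow> S v \<subseteq> X \<and> finite (S v) \<and> k \<le> card (S v)"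
  shows "\<exists>g\<in>PiE X (\<lambda>_. {..s}). \<forall>v\<in>cmp_vertices s n. S v \<inter> g -` {fst v} \<noteq> {}"
proof -
  define V where "V = cmp_vertices s n"
  have "\<forall>v\<in>V. finite (S v) \<and> k \<le> card (S v)"
    using assms(2) unfolding V_def by blast
  then obtain col where col: "\<forall>v\<in>V. col v \<in> S v"
    and proper: "\<forall>u\<in>V. \<forall>v\<in>V. fst u \<noteq> fst v \<longrightarrow> col u \<noteq> col v"
    using spec[OF assms(1)[unfolded choosable_def], of S] unfolding V_def cmp_adj_def by auto
  define g where "g c = (if c \<in> X then if c \<in> col ` V then fst (inv_into V col c) else 0 else undefined)"
    for c
  have "g \<in> PiE X (\<lambda>_. {..s})"
  proof (rule PiE_I)
    fix c assume "c \<in> X"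
    show "g c \<in> {..s}"
    proof (cases "c \<in> col ` V")
      case True
      then have "inv_into V col c \<in> V"
        by (rule inv_into_into)
      then show ?thesis
        using \<open>c \<in> X\<close> True fst_cmp_vertices unfolding g_def V_def by auto
    qed (use \<open>c \<in> X\<close> in \<open>simp add: g_def\<close>)
  qed (simp add: g_def)
  moreover have "S v \<inter> g -` {fst v} \<noteq> {}" if "v \<in> V" for v
  proof -
    have "col v \<in> col ` V"
      using that by blast
    then have "inv_into V col (col v) \<in> V" "col (inv_into V col (col v)) = col v"
      by (auto intro: inv_into_into f_inv_into_f)
    then have "fst (inv_into V col (col v)) = fst v"
      using proper that by metis
    moreover have "col v \<in> S v" "S v \<subseteq> X"
      using col assms(2) that unfolding V_def by blast+
    ultimately have "col v \<in> S v \<inter> g -` {fst v}"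
      unfolding g_def using that by auto
    then show ?thesis
      by blast
  qed
  ultimately show ?thesis
    unfolding V_def by blast
qed

lemma cmp_lists_subset_UN_part_maps:
  fixes X :: "nat set"
  assumes "choosable (cmp_vertices s n) cmp_adj k" "finite X"
  shows "PiE (cmp_vertices s n) (\<lambda>_. {A. A \<subseteq> X \<and> card A = k})
    \<subseteq> (\<Union>g\<in>PiE X (\<lambda>_. {..s}).
          PiE (cmp_vertices s n) (\<lambda>v. {A. A \<subseteq> X \<and> card A = k \<and> A \<inter> g -` {fst v} \<noteq> {}}))"
proof
  fix S assume S: "S \<in> PiE (cmp_vertices s n) (\<lambda>_. {A. A \<subseteq> X \<and> card A = k})"
  have S_sub: "S v \<subseteq> X \<and> card (S v) = k" if "v \<in> cmp_vertices s n" for v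
    using PiE_mem[OF S that] by blast
  then obtain g where g: "g \<in> PiE X (\<lambda>_. {..s})"
    and meets: "\<forall>v\<in>cmp_vertices s n. S v \<inter> g -` {fst v} \<noteq> {}"
    using cmp_part_map_if_choosable[OF assms(1), of S X] finite_subset[OF _ assms(2)] by auto
  have "S \<in> PiE (cmp_vertices s n) (\<lambda>v. {A. A \<subseteq> X \<and> card A = k \<and> A \<inter> g -` {fst v} \<noteq> {}})"
  proof (rule PiE_I)
    show "S v \<in> {A. A \<subseteq> X \<and> card A = k \<and> A \<inter> g -` {fst v} \<noteq> {}}"
      if "v \<in> cmp_vertices s n" for v
      using S_sub meets that by blast
    show "S v = undefined" if "v \<notin> cmp_vertices s n" for v
      using S that by (rule PiE_arb)
  qed
  with g show "S \<in> (\<Union>g\<in>PiE X (\<lambda>_. {..s}).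
      PiE (cmp_vertices s n) (\<lambda>v. {A. A \<subseteq> X \<and> card A = k \<and> A \<inter> g -` {fst v} \<noteq> {}}))"
    by (simp only: UN_iff) (rule bexI)
qed

lemma prod_one_minus_power_le_exp:
  fixes r :: "nat \<Rightarrow> real"
  assumes r: "\<And>j. j \<le> s \<Longrightarrow> 0 \<le> r j \<and> r j \<le> 1" and "i \<le> s"
  shows "(\<Prod>j\<le>s. (1 - r j) ^ n j) \<le> exp (- (real (n i) * r i))"
proof -
  have "(\<Prod>j\<le>s. (1 - r j) ^ n j) = (1 - r i) ^ n i * (\<Prod>j\<in>{..s} - {i}. (1 - r j) ^ n j)"
    using assms(2) by (simp add: prod.remove)
  also have "\<dots> \<le> (1 - r i) ^ n i"
    using r assms(2) by (intro mult_left_le prod_le_1 conjI zero_le_power power_le_one) auto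
  also have "\<dots> \<le> exp (- r i) ^ n i"
    using r[OF assms(2)] by (intro power_mono) (auto simp: exp_ge_add_one_self [of "- r i", simplified])
  also have "\<dots> = exp (- (real (n i) * r i))"
    by (simp add: exp_of_nat_mult[symmetric])
  finally show ?thesis .
qed

lemma card_lists_meeting_part_map_less:
  fixes g :: "nat \<Rightarrow> nat"
  assumes "k \<le> M" "i \<le> s"
    and large: "real M * ln (real s + 1) < real (n i) * avoid_prob M k (card {c\<in>{..<M}. g c = i})"
  shows "real (card (PiE (cmp_vertices s n)
            (\<lambda>v. {A. A \<subseteq> {..<M} \<and> card A = k \<and> A \<inter> g -` {fst v} \<noteq> {}})))
    < real (M choose k) ^ card (cmp_vertices s n) / real (Suc s) ^ M"
proof -
  define V where "V = cmp_vertices s n"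
  define r where "r j = avoid_prob M k (card {c\<in>{..<M}. g c = j})" for j
  have Mk: "0 < real (M choose k)"
    using assms(1) by simp
  have r: "0 \<le> r j \<and> r j \<le> 1" for j
    unfolding r_def avoid_prob_def
    using Mk binomial_right_mono[of "M - card {c\<in>{..<M}. g c = j}" M k] by auto
  have card_meeting: "real (card {A. A \<subseteq> {..<M} \<and> card A = k \<and> A \<inter> g -` {j} \<noteq> {}})
      = real (M choose k) * (1 - r j)" for j
  proof -
    have "{..<M} - g -` {j} = {..<M} - {c\<in>{..<M}. g c = j}"
      by auto
    then have "card ({..<M} - g -` {j}) = M - card {c\<in>{..<M}. g c = j}"
      using card_Diff_subset[of "{c\<in>{..<M}. g c = j}" "{..<M}"] by auto
    then show ?thesis
      using card_subsets_meeting[of "{..<M}" k "g -` {j}"] Mk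
        binomial_right_mono[of "M - card {c\<in>{..<M}. g c = j}" M k]
      by (simp add: r_def avoid_prob_def of_nat_diff field_simps)
  qed
  have "real (card (PiE V (\<lambda>v. {A. A \<subseteq> {..<M} \<and> card A = k \<and> A \<inter> g -` {fst v} \<noteq> {}})))
      = (\<Prod>v\<in>V. real (M choose k) * (1 - r (fst v)))"
    using finite_cmp_vertices by (simp add: V_def card_PiE card_meeting)
  also have "\<dots> = real (M choose k) ^ card V * (\<Prod>j\<le>s. (1 - r j) ^ n j)"
    using prod_cmp_vertices[of "\<lambda>j. 1 - r j" s n] by (simp add: prod.distrib V_def)
  also have "\<dots> \<le> real (M choose k) ^ card V * exp (- (real (n i) * r i))"
    using r assms(2) by (intro mult_left_mono prod_one_minus_power_le_exp) auto
  also have "\<dots> < real (M choose k) ^ card V * exp (- (real M * ln (real s + 1)))"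
    using large Mk unfolding r_def by simp
  also have "\<dots> = real (M choose k) ^ card V / real (Suc s) ^ M"
    by (simp add: exp_minus exp_of_nat_mult inverse_eq_divide add.commute)
  finally show ?thesis
    unfolding V_def .
qed

lemma cmp_not_choosable_if_union_bound:
  assumes "k \<le> M"
    and large: "\<forall>g\<in>PiE {..<M} (\<lambda>_. {..s}). \<exists>i\<le>s.
      real M * ln (real s + 1) < real (n i) * avoid_prob M k (card {c\<in>{..<M}. g c = i})"
  shows "\<not> choosable (cmp_vertices s n) cmp_adj k"
proof
  assume "choosable (cmp_vertices s n) cmp_adj k"
  define V where "V = cmp_vertices s n"
  define K where "K = {A. A \<subseteq> {..<M} \<and> card A = k}"
  define G where "G = PiE {..<M} (\<lambda>_. {..s})"
  define good where "good g = PiE V (\<lambda>v. {A. A \<subseteq> {..<M} \<and> card A = k \<and> A \<inter> g -` {fst v} \<noteq> {}})"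
    for g :: "nat \<Rightarrow> nat"
  have "finite K"
    unfolding K_def by (rule finite_subset[of _ "Pow {..<M}"]) auto
  then have fin: "finite V" "finite (PiE V (\<lambda>_. K))" "finite G"
    unfolding V_def G_def by (simp_all add: finite_cmp_vertices finite_PiE)
  have fin_good: "finite (good g)" for g
  proof (rule finite_subset[OF _ fin(2)])
    show "good g \<subseteq> PiE V (\<lambda>_. K)"
      unfolding good_def K_def by (intro PiE_mono) auto
  qed
  have "PiE V (\<lambda>_. K) \<subseteq> (\<Union>g\<in>G. good g)"
    using cmp_lists_subset_UN_part_maps[OF \<open>choosable _ _ k\<close> finite_lessThan]
    unfolding V_def K_def G_def good_def .
  then have "card (PiE V (\<lambda>_. K)) \<le> card (\<Union>g\<in>G. good g)"
    using fin(3) fin_good by (intro card_mono) auto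
  also have "\<dots> \<le> (\<Sum>g\<in>G. card (good g))"
    using fin(3) by (rule card_UN_le)
  finally have "real (card (PiE V (\<lambda>_. K))) \<le> (\<Sum>g\<in>G. real (card (good g)))"
    by (metis of_nat_mono of_nat_sum)
  also have "\<dots> < (\<Sum>g\<in>G. real (M choose k) ^ card V / real (Suc s) ^ M)"
  proof (rule sum_strict_mono)
    show "G \<noteq> {}"
      unfolding G_def by (simp add: PiE_eq_empty_iff)
    show "real (card (good g)) < real (M choose k) ^ card V / real (Suc s) ^ M" if g: "g \<in> G" for g
    proof -
      obtain i where "i \<le> s"
        "real M * ln (real s + 1) < real (n i) * avoid_prob M k (card {c\<in>{..<M}. g c = i})"
        using bspec[OF large g[unfolded G_def]] by blast
      then show ?thesis
        unfolding good_def V_def using assms(1) by (rule card_lists_meeting_part_map_less[rotated])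
    qed
  qed (rule fin(3))
  also have "\<dots> = real (card (PiE V (\<lambda>_. K)))"
    using fin(1) by (simp add: G_def K_def card_PiE n_subsets)
  finally show False
    by simp
qed

lemma deficit_le_root_of_binomial_ratio:
  fixes N B :: real
  assumes "1 \<le> k" "k \<le> M" "1 \<le> N" "0 \<le> B"
    and ratio: "N * avoid_prob M k m \<le> B"
  shows "(real M - real m - real k) / real M \<le> B powr (1 / real k) * N powr (- 1 / real k)"
proof (cases "m + k \<le> M")
  case True
  define x where "x = (real (M - m) - real k) / real M"
  have Mk: "0 < real (M choose k)"
    using assms(2) by simp
  have "real (M choose k) * x ^ k \<le> real ((M - m) choose k)"
    unfolding x_def using True assms(1,2) by (intro binomial_mult_power_le) auto
  then have "x ^ k \<le> avoid_prob M k m"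
    unfolding avoid_prob_def using Mk by (simp add: pos_le_divide_eq mult.commute)
  then have "N * x ^ k \<le> B"
    using assms(3) ratio by (meson order.trans mult_left_mono zero_le_one)
  then have "x ^ k \<le> B / N"
    using assms(3) by (simp add: pos_le_divide_eq mult.commute)
  then have "x \<le> (B / N) powr (1 / real k)"
    using assms(1,3,4) by (intro le_powr_inverse_if_power_le) auto
  then show ?thesis
    using True assms(3,4) unfolding x_def by (simp add: powr_divide powr_minus_divide of_nat_diff)
next
  case False
  then have "(real M - real m - real k) / real M \<le> 0"
    by (simp add: divide_nonpos_nonneg)
  then show ?thesis
    by (meson order.trans mult_nonneg_nonneg powr_ge_zero)
qed

lemma sum_fibre_deficits:
  fixes g :: "nat \<Rightarrow> nat"
  assumes "g ` {..<M} \<subseteq> {..s}" "0 < M"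
  shows "(\<Sum>i\<le>s. (real M - real (card {c\<in>{..<M}. g c = i}) - real k) / real M)
    = real s - real (s + 1) * real k / real M"
proof -
  have "(\<Sum>i\<le>s. card {c\<in>{..<M}. g c = i}) = M"
    using assms(1) sum.group[of "{..<M}" "{..s}" g "\<lambda>_. 1::nat"] by simp
  then have fibres: "(\<Sum>i\<le>s. real (card {c\<in>{..<M}. g c = i})) = real M"
    by (metis of_nat_sum)
  have "(\<Sum>i\<le>s. (real M - real (card {c\<in>{..<M}. g c = i}) - real k) / real M)
      = (\<Sum>i\<le>s. (real M - real k) - real (card {c\<in>{..<M}. g c = i})) / real M"
    by (subst sum_divide_distrib) (simp add: algebra_simps)
  also have "\<dots> = ((real s + 1) * (real M - real k) - real M) / real M"
    using fibres by (simp add: sum_subtractf)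
  also have "\<dots> = real s - real (s + 1) * real k / real M"
    using assms(2) by (simp add: field_simps)
  finally show ?thesis .
qed

lemma cmp_not_choosable_if:
  assumes "1 \<le> k" "k \<le> M" "\<And>i. i \<le> s \<Longrightarrow> 1 \<le> n i"
    and small: "(real M * ln (real s + 1)) powr (1 / real k) * (\<Sum>i\<le>s. real (n i) powr (- 1 / real k))
      < real s - real (s + 1) * real k / real M"
  shows "\<not> choosable (cmp_vertices s n) cmp_adj k"
proof (rule cmp_not_choosable_if_union_bound[OF assms(2)], rule ballI, rule ccontr)
  fix g :: "nat \<Rightarrow> nat"
  assume g: "g \<in> PiE {..<M} (\<lambda>_. {..s})"
  define B where "B = real M * ln (real s + 1)"
  define m where "m i = card {c\<in>{..<M}. g c = i}" for i
  assume "\<not> (\<exists>i\<le>s. B < real (n i) * avoid_prob M k (m i))"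
  then have "(real M - real (m i) - real k) / real M \<le> B powr (1 / real k) * real (n i) powr (- 1 / real k)"
    if "i \<le> s" for i
    using that assms(1-3) unfolding B_def
    by (intro deficit_le_root_of_binomial_ratio) (auto simp: not_less)
  then have "(\<Sum>i\<le>s. (real M - real (m i) - real k) / real M)
      \<le> (\<Sum>i\<le>s. B powr (1 / real k) * real (n i) powr (- 1 / real k))"
    by (intro sum_mono) auto
  also have "\<dots> = B powr (1 / real k) * (\<Sum>i\<le>s. real (n i) powr (- 1 / real k))"
    by (rule sum_distrib_left[symmetric])
  finally have deficits: "(\<Sum>i\<le>s. (real M - real (m i) - real k) / real M)
      \<le> B powr (1 / real k) * (\<Sum>i\<le>s. real (n i) powr (- 1 / real k))" .
  have "g ` {..<M} \<subseteq> {..s}"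
    using g by (auto simp: PiE_iff)
  then have "(\<Sum>i\<le>s. (real M - real (m i) - real k) / real M) = real s - real (s + 1) * real k / real M"
    unfolding m_def using assms(1,2) by (intro sum_fibre_deficits) auto
  then show False
    using deficits small unfolding B_def by linarith
qed

section \<open>Choosability thresholds\<close>

lemma cmp_choosable_above_threshold:
  assumes n_pos: "\<And>i. i \<le> s \<Longrightarrow> 1 \<le> n i" and "0 < t"
    and sum_eq: "(\<Sum>i\<le>s. real (n i) powr (- t)) = real s"
    and "1 + e \<le> t * real k"
    and small: "(\<Sum>i\<le>s. real (n i) powr (- e)) < 1"
  shows "choosable (cmp_vertices s n) cmp_adj k"
proof (rule cmp_choosable_if_expected_misses_lt_1[where p = "\<lambda>i. 1 - real (n i) powr (- t)"])
  show "0 \<le> 1 - real (n i) powr (- t)" if "i \<le> s" for i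
  proof -
    have "real (n i) powr (- t) \<le> real (n i) powr 0"
      using n_pos[OF that] \<open>0 < t\<close> by (intro powr_mono) auto
    then show ?thesis
      using n_pos[OF that] by simp
  qed
  show "(\<Sum>i\<le>s. 1 - real (n i) powr (- t)) = 1"
    using sum_eq by (simp add: sum_subtractf)
  have "real (n i) * (1 - (1 - real (n i) powr (- t))) ^ k \<le> real (n i) powr (- e)" if "i \<le> s" for i
  proof -
    have "(1 - (1 - real (n i) powr (- t))) ^ k = real (n i) powr (- (t * real k))"
      using n_pos[OF that] by (simp add: powr_power mult.commute)
    then have "real (n i) * (1 - (1 - real (n i) powr (- t))) ^ k = real (n i) powr (1 - t * real k)"
      by (simp add: powr_mult_base)
    also have "\<dots> \<le> real (n i) powr (- e)"
      using n_pos[OF that] \<open>1 + e \<le> t * real k\<close> by (intro powr_mono) auto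
    finally show ?thesis .
  qed
  then have "(\<Sum>i\<le>s. real (n i) * (1 - (1 - real (n i) powr (- t))) ^ k)
      \<le> (\<Sum>i\<le>s. real (n i) powr (- e))"
    by (intro sum_mono) auto
  then show "(\<Sum>i\<le>s. real (n i) * (1 - (1 - real (n i) powr (- t))) ^ k) < 1"
    using small by (rule order.strict_trans1)
qed

lemma powr_inverse_less_one_minus_half_inverse:
  fixes x :: real
  assumes "1 \<le> k" "0 \<le> x" "x < 1 / 2"
  shows "x powr (1 / real k) < 1 - 1 / (2 * real k)"
proof -
  have pos: "0 < 1 - 1 / (2 * real k)"
    using assms(1) by (simp add: field_simps)
  have "1 / 2 \<le> (1 - 1 / (2 * real k)) ^ k"
    using Bernoulli_inequality[of "- 1 / (2 * real k)" k] assms(1) by (simp add: field_simps)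
  then have "x powr (1 / real k) < ((1 - 1 / (2 * real k)) ^ k) powr (1 / real k)"
    using assms by (intro powr_less_mono2) auto
  also have "\<dots> = 1 - 1 / (2 * real k)"
    using assms(1) pos by (simp add: powr_realpow[symmetric] powr_powr)
  finally show ?thesis .
qed

lemma sum_powr_inverse_le:
  fixes t e :: real
  assumes "0 < t" "0 < e" "1 \<le> k" "t * (1 + e) \<le> 1 / real k"
    and "1 \<le> n 0" and sorted: "\<And>i. i \<le> s \<Longrightarrow> n 0 \<le> n i"
    and sum_eq: "(\<Sum>i\<le>s. real (n i) powr (- t)) = real s"
  shows "(\<Sum>i\<le>s. real (n i) powr (- 1 / real k)) \<le> real s * real (n 0) powr (- (t * e))"
proof -
  have "real (n i) powr (- 1 / real k) \<le> real (n i) powr (- t) * real (n 0) powr (- (t * e))"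
    if "i \<le> s" for i
  proof -
    have "real (n i) powr (- 1 / real k) \<le> real (n i) powr (- t - t * e)"
      using assms(4,5) sorted[OF that] by (intro powr_mono) (auto simp: algebra_simps)
    also have "\<dots> = real (n i) powr (- t) * real (n i) powr (- (t * e))"
      by (simp add: powr_add[symmetric])
    also have "\<dots> \<le> real (n i) powr (- t) * real (n 0) powr (- (t * e))"
      using assms(1,2,5) sorted[OF that] by (intro mult_left_mono powr_mono2') auto
    finally show ?thesis .
  qed
  then have "(\<Sum>i\<le>s. real (n i) powr (- 1 / real k))
      \<le> (\<Sum>i\<le>s. real (n i) powr (- t) * real (n 0) powr (- (t * e)))"
    by (intro sum_mono) auto
  also have "\<dots> = real s * real (n 0) powr (- (t * e))"
    using sum_eq by (simp add: sum_distrib_right[symmetric])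
  finally show ?thesis .
qed

lemma powr_inverse_palette_bound_less:
  fixes t e N :: real
  assumes "1 \<le> k" "0 < t" "0 < e" "1 / 2 \<le> t * real k" "t * real k \<le> 1" "2 \<le> N"
    and large: "8 * ln (real s + 1) * (1 / t)^2 < N powr (e / 2)"
  shows "(real (4 * k^2) * ln (real s + 1)) powr (1 / real k) * N powr (- (t * e))
    < 1 - 1 / (2 * real k)"
proof -
  define X where "X = real (4 * k^2) * ln (real s + 1) * N powr (- (t * e * real k))"
  have "N powr (- (t * e)) = (N powr (- (t * e * real k))) powr (1 / real k)"
    using assms(1) by (simp add: powr_powr)
  then have "(real (4 * k^2) * ln (real s + 1)) powr (1 / real k) * N powr (- (t * e))
      = X powr (1 / real k)"
    unfolding X_def by (simp add: powr_mult)
  also have "\<dots> < 1 - 1 / (2 * real k)"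
  proof (rule powr_inverse_less_one_minus_half_inverse[OF assms(1)])
    show "0 \<le> X"
      unfolding X_def by simp
    have "real k ^ 2 \<le> (1 / t) ^ 2"
      using assms(2,5) by (intro power_mono) (auto simp: field_simps)
    then have "real (4 * k^2) * ln (real s + 1) \<le> 4 * (1 / t)^2 * ln (real s + 1)"
      by (intro mult_right_mono) auto
    moreover have "N powr (- (t * e * real k)) \<le> N powr (- (e / 2))"
      using assms(3,4,6) by (intro powr_mono) (auto simp: mult_left_mono algebra_simps)
    ultimately have "X \<le> 4 * (1 / t)^2 * ln (real s + 1) * N powr (- (e / 2))"
      unfolding X_def by (rule mult_mono) auto
    also have "\<dots> = 4 * (1 / t)^2 * ln (real s + 1) / N powr (e / 2)"
      by (simp add: powr_minus_divide)
    also have "\<dots> < 1 / 2"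
      using large assms(6) by (simp add: divide_less_eq mult_ac)
    finally show "X < 1 / 2" .
  qed
  finally show ?thesis .
qed

lemma cmp_not_choosable_below_threshold:
  assumes "1 \<le> s" "2 \<le> n 0" and sorted: "\<And>i. i \<le> s \<Longrightarrow> n 0 \<le> n i"
    and sum_eq: "(\<Sum>i\<le>s. real (n i) powr (- t)) = real s"
    and "0 < t" "0 < e" "e \<le> 1 / 4" "t < e"
    and k_upper: "t * real k \<le> 1 - e" and k_lower: "1 - e < t * (real k + 1)"
    and large: "8 * ln (real s + 1) * (1 / t)^2 < real (n 0) powr (e / 2)"
  shows "\<not> choosable (cmp_vertices s n) cmp_adj k"
proof -
  define B where "B = (real (4 * k^2) * ln (real s + 1)) powr (1 / real k)"
  have "1 / 2 \<le> t * real k"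
    using k_lower assms(7,8) by (simp add: algebra_simps)
  then have "1 \<le> k"
    by (cases k) auto
  have "t * real k * (1 + e) \<le> (1 - e) * (1 + e)"
    using k_upper assms(6) by (intro mult_right_mono) auto
  also have "\<dots> \<le> 1"
    by (simp add: algebra_simps)
  finally have "t * (1 + e) \<le> 1 / real k"
    using \<open>1 \<le> k\<close> by (simp add: field_simps)
  then have "B * (\<Sum>i\<le>s. real (n i) powr (- 1 / real k)) \<le> B * (real s * real (n 0) powr (- (t * e)))"
    using sum_powr_inverse_le[of t e k n s] assms(2,5,6) sorted sum_eq \<open>1 \<le> k\<close>
    by (intro mult_left_mono) (auto simp: B_def)
  also have "\<dots> < real s * (1 - 1 / (2 * real k))"
    using powr_inverse_palette_bound_less[of k t e "real (n 0)" s] assms(1,2,5,6) large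
      \<open>1 / 2 \<le> t * real k\<close> \<open>1 \<le> k\<close> k_upper
    by (simp add: B_def mult.commute[of "real s"])
  also have "\<dots> \<le> real s - real (s + 1) * real k / real (4 * k^2)"
    using assms(1) \<open>1 \<le> k\<close> by (simp add: power2_eq_square field_simps)
  finally have small: "B * (\<Sum>i\<le>s. real (n i) powr (- 1 / real k))
      < real s - real (s + 1) * real k / real (4 * k^2)" .
  show ?thesis
  proof (rule cmp_not_choosable_if[of k "4 * k^2"])
    show "k \<le> 4 * k^2"
      by (simp add: power2_eq_square)
    show "1 \<le> n i" if "i \<le> s" for i
      using assms(2) sorted[OF that] by linarith
  qed (use \<open>1 \<le> k\<close> small B_def in auto)
qed

lemma cmp_choice_number_mult_less:
  assumes n_pos: "\<And>i. i \<le> s \<Longrightarrow> 1 \<le> n i" and "0 < t" "0 < e"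
    and sum_eq: "(\<Sum>i\<le>s. real (n i) powr (- t)) = real s"
    and small: "(\<Sum>i\<le>s. real (n i) powr (- e)) < 1"
  shows "real (ch_complete_multipartite s n) * t < 1 + e + t"
proof -
  define k where "k = nat \<lceil>(1 + e) / t\<rceil>"
  have "(1 + e) / t \<le> real k" "real k < (1 + e) / t + 1"
    unfolding k_def using assms(2,3) by (auto simp: of_nat_nat) linarith+
  then have k: "1 + e \<le> t * real k" "real k * t < 1 + e + t"
    using assms(2) by (simp_all add: field_simps)
  then have "choosable (cmp_vertices s n) cmp_adj k"
    using assms by (intro cmp_choosable_above_threshold[of s n t])
  then have "ch_complete_multipartite s n \<le> k"
    unfolding ch_complete_multipartite_def by (rule choice_number_le)
  then have "real (ch_complete_multipartite s n) * t \<le> real k * t"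
    using assms(2) by (intro mult_right_mono) auto
  then show ?thesis
    using k(2) by linarith
qed

lemma cmp_choice_number_mult_greater:
  assumes "1 \<le> s" "2 \<le> n 0" and sorted: "\<And>i. i \<le> s \<Longrightarrow> n 0 \<le> n i"
    and sum_eq: "(\<Sum>i\<le>s. real (n i) powr (- t)) = real s"
    and "0 < t" "0 < e" "e \<le> 1 / 4" "t < e"
    and large: "8 * ln (real s + 1) * (1 / t)^2 < real (n 0) powr (e / 2)"
  shows "1 - e < real (ch_complete_multipartite s n) * t"
proof -
  define k where "k = nat \<lfloor>(1 - e) / t\<rfloor>"
  have "0 \<le> (1 - e) / t"
    using assms(5,7) by simp
  then have "real k \<le> (1 - e) / t" "(1 - e) / t < real k + 1"
    unfolding k_def by (simp_all add: of_nat_nat)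
  then have k: "t * real k \<le> 1 - e" "1 - e < t * (real k + 1)"
    using assms(5) by (simp_all add: field_simps)
  then have "\<not> choosable (cmp_vertices s n) cmp_adj k"
    using assms by (intro cmp_not_choosable_below_threshold) auto
  moreover obtain l where "choosable (cmp_vertices s n) cmp_adj l"
    using ex_cmp_choosable by blast
  ultimately have "k < ch_complete_multipartite s n"
    unfolding ch_complete_multipartite_def by (intro less_choice_number)
  then have "t * (real k + 1) \<le> t * real (ch_complete_multipartite s n)"
    using assms(5) by (intro mult_left_mono) auto
  then show ?thesis
    using k(2) by (simp add: mult.commute)
qed

lemma cmp_choice_number_bounds:
  assumes "1 \<le> s" "2 \<le> n 0" and sorted: "\<And>i. i \<le> s \<Longrightarrow> n 0 \<le> n i"
    and sum_eq: "(\<Sum>i\<le>s. real (n i) powr (- t)) = real s"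
    and "0 < t" "0 < e" "e \<le> 1 / 4" "t < e"
    and upper_cond: "(real s + 1) * real (n 0) powr (- e) < 1"
    and lower_cond: "8 * ln (real s + 1) * (1 / t)^2 < real (n 0) powr (e / 2)"
  shows "1 - e < real (ch_complete_multipartite s n) * t
    \<and> real (ch_complete_multipartite s n) * t < 1 + 2 * e"
proof
  have "(\<Sum>i\<le>s. real (n i) powr (- e)) \<le> (\<Sum>i\<le>s. real (n 0) powr (- e))"
    using assms(2,6) sorted by (intro sum_mono powr_mono2') auto
  also have "\<dots> = (real s + 1) * real (n 0) powr (- e)"
    by simp
  finally have "(\<Sum>i\<le>s. real (n i) powr (- e)) < 1"
    using upper_cond by (rule order.strict_trans1)
  moreover have "1 \<le> n i" if "i \<le> s" for i
    using assms(2) sorted[OF that] by linarith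
  ultimately have "real (ch_complete_multipartite s n) * t < 1 + e + t"
    using assms(5,6) sum_eq by (intro cmp_choice_number_mult_less)
  then show "real (ch_complete_multipartite s n) * t < 1 + 2 * e"
    using assms(8) by linarith
  show "1 - e < real (ch_complete_multipartite s n) * t"
    using assms by (intro cmp_choice_number_mult_greater)
qed

section \<open>Asymptotics\<close>

lemma sum_powr_eq_of_root:
  fixes x :: real and n :: "nat \<Rightarrow> nat"
  assumes "1 \<le> x" and n_ge: "\<And>i. i \<le> s \<Longrightarrow> 2 \<le> n i"
    and root: "real s * x - 1
      - (\<Sum>j<s. x powr ((log 2 (n s) / log 2 (n j) - 1) / (log 2 (n s) / log 2 (n j)))) = 0"
  shows "(\<Sum>i\<le>s. real (n i) powr (- (log 2 x / log 2 (n s)))) = real s"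
proof -
  define t where "t = log 2 x / log 2 (n s)"
  have ln_pos: "0 < ln (real (n i))" if "i \<le> s" for i
    using n_ge[OF that] by simp
  have t_ln: "t = ln x / ln (real (n s))"
    unfolding t_def log_def by simp
  have "x powr ((log 2 (n s) / log 2 (n j) - 1) / (log 2 (n s) / log 2 (n j)))
      = x * real (n j) powr (- t)" if "j < s" for j
  proof -
    define a where "a = ln (real (n j)) / ln (real (n s))"
    have "(log 2 (n s) / log 2 (n j) - 1) / (log 2 (n s) / log 2 (n j)) = 1 - a"
      using ln_pos[of j] ln_pos[of s] that unfolding log_def a_def by (simp add: field_simps)
    moreover have "x powr (1 - a) = x * x powr (- a)"
      using assms(1) by (simp add: powr_mult_base)
    moreover have "x powr (- a) = real (n j) powr (- t)"
      using assms(1) n_ge[of j] that unfolding t_ln a_def by (simp add: powr_def field_simps)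
    ultimately show ?thesis
      by simp
  qed
  then have "(\<Sum>j<s. real (n j) powr (- t)) = real s - 1 / x"
    using root assms(1) by (simp add: sum_distrib_left[symmetric] field_simps)
  moreover have "real (n s) powr (- t) = 1 / x"
    using assms(1) n_ge[of s] ln_pos[of s] unfolding t_ln by (simp add: powr_def exp_minus inverse_eq_divide)
  ultimately show ?thesis
    unfolding t_def[symmetric] by (simp add: lessThan_Suc_atMost[symmetric])
qed

lemma log_bounds_of_sum_powr_eq:
  fixes t :: real
  assumes "1 \<le> s" "1 \<le> n 0" and sorted: "\<And>i. i \<le> s \<Longrightarrow> n 0 \<le> n i \<and> n i \<le> n s"
    and sum_eq: "(\<Sum>i\<le>s. real (n i) powr (- t)) = real s"
  shows "0 < t" "t * log 2 (n 0) \<le> log 2 (1 + 1 / real s)"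
    "log 2 (1 + 1 / real s) \<le> t * log 2 (n s)"
proof -
  have n_pos: "0 < real (n i)" if "i \<le> s" for i
    using assms(2) sorted[OF that] by simp
  have "0 < 1 + 1 / real s"
    by (simp add: add_pos_nonneg)
  show "0 < t"
  proof (rule ccontr)
    assume "\<not> 0 < t"
    then have "(\<Sum>i\<le>s. 1) \<le> (\<Sum>i\<le>s. real (n i) powr (- t))"
      using assms(2) sorted by (intro sum_mono ge_one_powr_ge_zero) (auto intro: order.trans)
    then show False
      using sum_eq by simp
  qed
  have "real s \<le> (\<Sum>i\<le>s. real (n 0) powr (- t))"
    unfolding sum_eq[symmetric] using n_pos sorted \<open>0 < t\<close> by (intro sum_mono powr_mono2') auto
  then have "real s * real (n 0) powr t \<le> real s + 1"
    using n_pos[of 0] by (simp add: powr_minus field_simps)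
  then have "real (n 0) powr t \<le> 1 + 1 / real s"
    using assms(1) by (simp add: field_simps)
  then show "t * log 2 (n 0) \<le> log 2 (1 + 1 / real s)"
    using n_pos[of 0] \<open>0 < 1 + 1 / real s\<close> by (simp add: log_powr[symmetric])
  have "(\<Sum>i\<le>s. real (n s) powr (- t)) \<le> real s"
    unfolding sum_eq[symmetric] using n_pos sorted \<open>0 < t\<close> by (intro sum_mono powr_mono2') auto
  then have "real s + 1 \<le> real s * real (n s) powr t"
    using n_pos[of s] by (simp add: powr_minus field_simps)
  then have "1 + 1 / real s \<le> real (n s) powr t"
    using assms(1) by (simp add: field_simps)
  then show "log 2 (1 + 1 / real s) \<le> t * log 2 (n s)"
    using n_pos[of s] \<open>0 < 1 + 1 / real s\<close> by (simp add: log_powr[symmetric])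
qed

lemma two_sqrt_le_log2_powr:
  fixes L \<alpha> :: real
  assumes "2 \<le> L" "2 * sqrt (L / log 2 L) \<le> \<alpha>"
  shows "2 * sqrt L \<le> log 2 (L powr \<alpha>)"
proof -
  have "1 \<le> log 2 L"
    using assms(1) by simp
  have "2 * sqrt L \<le> 2 * sqrt L * sqrt (log 2 L)"
    using \<open>1 \<le> log 2 L\<close> assms(1) by (simp add: mult_le_cancel_left1)
  also have "\<dots> = 2 * sqrt (L / log 2 L) * log 2 L"
    using \<open>1 \<le> log 2 L\<close> by (simp add: real_sqrt_divide field_simps flip: real_sqrt_mult)
  also have "\<dots> \<le> \<alpha> * log 2 L"
    using assms(2) \<open>1 \<le> log 2 L\<close> by (intro mult_right_mono) auto
  also have "\<dots> = log 2 (L powr \<alpha>)"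
    by (simp add: log_powr)
  finally show ?thesis .
qed

lemma cmp_choice_number_bounds_if_large:
  fixes s :: nat and n :: "nat \<Rightarrow> nat" and t e :: real
  defines "L \<equiv> log 2 (real (n s))"
  assumes "1 \<le> s" "2 \<le> n 0" and sorted: "\<And>i. i \<le> s \<Longrightarrow> n 0 \<le> n i \<and> n i \<le> n s"
    and sum_eq: "(\<Sum>i\<le>s. real (n i) powr (- t)) = real s"
    and log_n0: "2 * sqrt L \<le> log 2 (n 0)" and "0 < e" "e \<le> 1 / 4"
    and large: "8 * ln (real s + 1) * (L / log 2 (1 + 1 / real s))^2 < 2 powr (e * sqrt L)"
      "(real s + 1) * 2 powr (- (2 * e * sqrt L)) < 1" "1 / (2 * sqrt L) < e"
  shows "1 - e < real (ch_complete_multipartite s n) * t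
    \<and> real (ch_complete_multipartite s n) * t < 1 + 2 * e"
proof -
  define c where "c = log 2 (1 + 1 / real s)"
  have "0 < t" and t_n0: "t * log 2 (n 0) \<le> c" and t_ns: "c \<le> t * L"
    using log_bounds_of_sum_powr_eq[of s n t] assms(2,3) sorted sum_eq unfolding c_def L_def
    by auto
  have "0 < c" "c \<le> 1"
    using assms(2) unfolding c_def by (simp_all add: field_simps)
  have "1 \<le> L"
    using assms(3) sorted[of s] unfolding L_def by simp
  then have "1 \<le> sqrt L"
    by simp
  then have "0 < log 2 (n 0)"
    using log_n0 by linarith
  have n0_powr: "real (n 0) powr a = 2 powr (a * log 2 (n 0))" for a
    using assms(3) by (simp add: powr_def log_def)
  show ?thesis
  proof (rule cmp_choice_number_bounds[OF assms(2,3) _ sum_eq \<open>0 < t\<close> assms(7,8)])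
    show "n 0 \<le> n i" if "i \<le> s" for i
      using sorted[OF that] by simp
    have "t \<le> 1 / log 2 (n 0)"
      using t_n0 \<open>c \<le> 1\<close> \<open>0 < log 2 (n 0)\<close> by (simp add: field_simps)
    also have "\<dots> \<le> 1 / (2 * sqrt L)"
      using log_n0 \<open>1 \<le> sqrt L\<close> \<open>0 < log 2 (n 0)\<close> by (intro divide_left_mono) (auto intro: mult_pos_pos)
    finally show "t < e"
      using large(3) by linarith
    have "real (n 0) powr (- e) \<le> 2 powr (- (2 * e * sqrt L))"
      unfolding n0_powr using log_n0 \<open>0 < e\<close> by (intro powr_mono) auto
    then have "(real s + 1) * real (n 0) powr (- e) \<le> (real s + 1) * 2 powr (- (2 * e * sqrt L))"
      by (intro mult_left_mono) auto
    then show "(real s + 1) * real (n 0) powr (- e) < 1"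
      using large(2) by linarith
    have "1 / t \<le> L / c"
      using t_ns \<open>0 < t\<close> \<open>0 < c\<close> by (simp add: field_simps)
    then have "8 * ln (real s + 1) * (1 / t)^2 \<le> 8 * ln (real s + 1) * (L / c)^2"
      using \<open>0 < t\<close> by (intro mult_left_mono power_mono) auto
    also have "\<dots> < 2 powr (e * sqrt L)"
      using large(1) unfolding c_def .
    also have "\<dots> \<le> real (n 0) powr (e / 2)"
      unfolding n0_powr using log_n0 \<open>0 < e\<close> by (intro powr_mono) auto
    finally show "8 * ln (real s + 1) * (1 / t)^2 < real (n 0) powr (e / 2)" .
  qed
qed

definition sufficiently_large :: "nat \<Rightarrow> real \<Rightarrow> real \<Rightarrow> bool" where
  "sufficiently_large s e L \<longleftrightarrow> 2 \<le> L
    \<and> 8 * ln (real s + 1) * (L / log 2 (1 + 1 / real s))^2 < 2 powr (e * sqrt L)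
    \<and> (real s + 1) * 2 powr (- (2 * e * sqrt L)) < 1 \<and> 1 / (2 * sqrt L) < e"

lemma eventually_sufficiently_large:
  assumes "1 \<le> s" "0 < e"
  shows "eventually (sufficiently_large s e) at_top"
proof -
  have "eventually (\<lambda>L. 2 \<le> L \<and> 8 * ln (real s + 1) * (L / c)^2 < 2 powr (e * sqrt L)
      \<and> (real s + 1) * 2 powr (- (2 * e * sqrt L)) < 1 \<and> 1 / (2 * sqrt L) < e) at_top"
    if "0 < c" for c :: real
    using that assms(2) by (intro eventually_conj; real_asymp)
  moreover have "0 < log 2 (1 + 1 / real s)"
    using assms(1) by (simp add: field_simps)
  ultimately show ?thesis
    unfolding sufficiently_large_def by blast
qed

lemma cmp_choice_number_bounds_of_root:
  fixes s :: nat and n :: "nat \<Rightarrow> nat" and x \<alpha> e :: real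
  defines "L \<equiv> log 2 (real (n s))"
  assumes "1 \<le> s" "2 \<le> n 0" and mono: "\<forall>i<s. n i \<le> n (Suc i)"
    and n0_size: "2 * sqrt (L / log 2 L) \<le> \<alpha>" "real (n 0) = L powr \<alpha>"
    and root: "1 \<le> x" "real s * x - 1
      - (\<Sum>j<s. x powr ((log 2 (n s) / log 2 (n j) - 1) / (log 2 (n s) / log 2 (n j)))) = 0"
    and "0 < e" "e \<le> 1 / 4" and large: "sufficiently_large s e L"
  shows "1 - e < real (ch_complete_multipartite s n) * (log 2 x / L)
    \<and> real (ch_complete_multipartite s n) * (log 2 x / L) < 1 + 2 * e"
proof -
  have step: "n j \<le> n (Suc j)" if "j \<in> {..<s}" for j
    using mono that by simp
  have sorted: "n 0 \<le> n i \<and> n i \<le> n s" if "i \<le> s" for i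
  proof
    show "n 0 \<le> n i"
      by (rule lift_Suc_mono_le_ivl[of "{..<s}" n, OF step]) (use that in auto)
    show "n i \<le> n s"
      by (rule lift_Suc_mono_le_ivl[of "{..<s}" n, OF step]) (use that in auto)
  qed
  then have "2 \<le> n i" if "i \<le> s" for i
    using that assms(3) by (meson le_trans)
  then have "(\<Sum>i\<le>s. real (n i) powr (- (log 2 x / L))) = real s"
    unfolding L_def using root by (intro sum_powr_eq_of_root)
  moreover have "2 * sqrt L \<le> log 2 (n 0)"
    using two_sqrt_le_log2_powr n0_size large unfolding sufficiently_large_def by simp
  ultimately show ?thesis
    using assms(2,3) sorted \<open>0 < e\<close> \<open>e \<le> 1 / 4\<close> large unfolding L_def sufficiently_large_def
    by (intro cmp_choice_number_bounds_if_large) auto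
qed

lemma tendsto_1_if_eventually_bounds:
  fixes f :: "'a \<Rightarrow> real"
  assumes "\<And>e. 0 < e \<Longrightarrow> e \<le> 1 / 4 \<Longrightarrow> eventually (\<lambda>x. 1 - e < f x \<and> f x < 1 + 2 * e) F"
  shows "(f \<longlongrightarrow> 1) F"
proof (rule order_tendstoI)
  fix a :: real
  assume "a < 1"
  define e where "e = min (1 - a) (1 / 4)"
  have "0 < e" "e \<le> 1 / 4" "a \<le> 1 - e"
    using \<open>a < 1\<close> by (auto simp: e_def min_def)
  from assms[OF this(1,2)] show "eventually (\<lambda>x. a < f x) F"
    by (rule eventually_mono) (use \<open>a \<le> 1 - e\<close> in linarith)
next
  fix a :: real
  assume "1 < a"
  define e where "e = min ((a - 1) / 2) (1 / 4)"
  have "0 < e" "e \<le> 1 / 4" "1 + 2 * e \<le> a"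
    using \<open>1 < a\<close> by (auto simp: e_def min_def field_simps)
  from assms[OF this(1,2)] show "eventually (\<lambda>x. f x < a) F"
    by (rule eventually_mono) (use \<open>1 + 2 * e \<le> a\<close> in linarith)
qed

theorem theorem4:
  fixes s :: nat and n :: "nat \<Rightarrow> nat \<Rightarrow> nat" and x0 :: "nat \<Rightarrow> real"
  assumes s_pos: "s \<ge> 1"
    and n0_ge2: "\<forall>m. 2 \<le> n m 0"
    and mono: "\<forall>m. \<forall>i<s. n m i \<le> n m (Suc i)"
    and ns_inf: "filterlim (\<lambda>m. n m s) at_top sequentially"
    and n0_size: "\<forall>m. \<exists>\<alpha>::real.
        \<alpha> \<ge> 2 * sqrt (log 2 (n m s) / log 2 (log 2 (n m s)))
        \<and> real (n m 0) = (log 2 (n m s)) powr \<alpha>"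
    and x0_root: "\<forall>m. x0 m \<ge> 1 \<and>
        real s * x0 m - 1
        - (\<Sum>j<s. x0 m powr ((log 2 (n m s) / log 2 (n m j) - 1)
                             / (log 2 (n m s) / log 2 (n m j)))) = 0"
  shows "(\<lambda>m. real (ch_complete_multipartite s (n m)))
           \<sim>[sequentially] (\<lambda>m. log 2 (n m s) / log 2 (x0 m))"
proof -
  define L where "L m = log 2 (real (n m s))" for m
  have "filterlim (\<lambda>x::real. log 2 x) at_top at_top"
    by real_asymp
  then have L_at_top: "filterlim L at_top sequentially"
    unfolding L_def by (rule filterlim_compose[OF _ filterlim_compose[OF filterlim_real_sequentially ns_inf]])
  have "((\<lambda>m. real (ch_complete_multipartite s (n m)) * (log 2 (x0 m) / L m)) \<longlongrightarrow> 1) sequentially"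
  proof (rule tendsto_1_if_eventually_bounds)
    fix e :: real
    assume e: "0 < e" "e \<le> 1 / 4"
    from eventually_compose_filterlim[OF eventually_sufficiently_large[OF s_pos e(1)] L_at_top]
    show "eventually (\<lambda>m. 1 - e < real (ch_complete_multipartite s (n m)) * (log 2 (x0 m) / L m)
        \<and> real (ch_complete_multipartite s (n m)) * (log 2 (x0 m) / L m) < 1 + 2 * e) sequentially"
    proof eventually_elim
      case (elim m)
      obtain \<alpha> where "2 * sqrt (L m / log 2 (L m)) \<le> \<alpha>" "real (n m 0) = L m powr \<alpha>"
        using n0_size unfolding L_def by blast
      with elim show ?case
        using s_pos n0_ge2 mono x0_root e unfolding L_def by (intro cmp_choice_number_bounds_of_root) auto
    qed
  qed
  then show ?thesis
    by (intro asymp_equivI') (simp add: L_def)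
qed

end
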